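(* Let $\lambda>0$, $\gamma\ge0$, $\omega\in[-\pi,\pi]$, and let $\theta\sim\mathrm{GCPC}(\omega,\gamma,\lambda)$, with $\theta$ represented in $(\omega-\pi,\omega+\pi]$. Put $\delta=(\sqrt{\gamma^2+1}-1)/\gamma$ (with $\delta=0$ if $\gamma=0$). For $t\in(\omega-\pi,\omega+\pi)$ define $$\psi(t)=\operatorname{atan2}\bigl(\sin(t-\omega),\ \sqrt{\lambda}\cos(t-\omega)\bigr)\in(-\pi,\pi).$$ Then for all $\omega-\pi<a\le b<\omega+\pi$, $$P(a\le\theta\le b)=\frac{1}{\pi}\left[\arctan\!\left(\frac{1+\delta}{1-\delta}\tan\frac{\psi(b)}{2}\right)-\arctan\!\left(\frac{1+\delta}{1-\delta}\tan\frac{\psi(a)}{2}\right)\right].$$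
   Context: For $\lambda>0$, $\gamma\ge0$ and $\omega\in[-\pi,\pi]$, the distribution $\mathrm{GCPC}(\omega,\gamma,\lambda)$ is the distribution on the circle with density $$f(\theta)=\frac{1}{2\pi\sqrt{\lambda}\,\bigl(b\sqrt{\gamma^2+1}-\gamma\cos\phi\,\sqrt{b}\bigr)},\qquad \phi=\theta-\omega,\quad b=\cos^2\phi+\frac{\sin^2\phi}{\lambda}.$$ The function $\operatorname{atan2}(y,x)\in(-\pi,\pi]$ is the standard two-argument arctangent, i.e. the polar angle of the point $(x,y)\ne(0,0)$. *)

theory Defs
  imports "HOL-Probability.Probability"
begin

definition atan2 :: "real \<Rightarrow> real \<Rightarrow> real" where
  "atan2 y x = Arg (Complex x y)"

definition gcpc_pdf :: "real \<Rightarrow> real \<Rightarrow> real \<Rightarrow> real \<Rightarrow> real" where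
  "gcpc_pdf \<omega> \<gamma> lam \<theta> =
     (let \<phi> = \<theta> - \<omega>; b = (cos \<phi>)\<^sup>2 + (sin \<phi>)\<^sup>2 / lam
      in 1 / (2 * pi * sqrt lam * (b * sqrt (\<gamma>\<^sup>2 + 1) - \<gamma> * cos \<phi> * sqrt b)))"

definition gcpc_density :: "real \<Rightarrow> real \<Rightarrow> real \<Rightarrow> real \<Rightarrow> ennreal" where
  "gcpc_density \<omega> \<gamma> lam \<theta> =
     ennreal (indicator {\<omega> - pi<..\<omega> + pi} \<theta> * gcpc_pdf \<omega> \<gamma> lam \<theta>)"

definition gcpc_delta :: "real \<Rightarrow> real" where
  "gcpc_delta \<gamma> = (if \<gamma> = 0 then 0 else (sqrt (\<gamma>\<^sup>2 + 1) - 1) / \<gamma>)"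

definition gcpc_psi :: "real \<Rightarrow> real \<Rightarrow> real \<Rightarrow> real" where
  "gcpc_psi \<omega> lam t = atan2 (sin (t - \<omega>)) (sqrt lam * cos (t - \<omega>))"

end

theory Submission
  imports Defs
begin

text \<open>
  Write \<open>x = \<surd>\<lambda> cos (t - \<omega>)\<close>, \<open>y = sin (t - \<omega>)\<close> and \<open>r = \<surd>(x\<^sup>2 + y\<^sup>2)\<close>, so that \<open>\<psi>(t)\<close> is the
  polar angle of \<open>(x, y)\<close> and \<open>tan (\<psi>(t) / 2) = y / (r + x)\<close>, a smooth function of \<open>t\<close> on
  \<open>(\<omega> - \<pi>, \<omega> + \<pi>)\<close> with derivative \<open>\<surd>\<lambda> / (r (r + x))\<close>.  In these terms the density is
  \<open>\<surd>\<lambda> / (2 \<pi> r (r \<surd>(\<gamma>\<^sup>2 + 1) - \<gamma> x))\<close>, and with \<open>K = (1 + \<delta>) / (1 - \<delta>) = \<gamma> + \<surd>(\<gamma>\<^sup>2 + 1)\<close> the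
  identity \<open>(r + x)\<^sup>2 + K\<^sup>2 y\<^sup>2 = 2 K (r + x) (r \<surd>(\<gamma>\<^sup>2 + 1) - \<gamma> x)\<close> shows that it is the
  derivative of \<open>arctan (K tan (\<psi>(t) / 2)) / \<pi>\<close>.  The fundamental theorem of calculus
  then gives the probability of \<open>[a, b]\<close>.
\<close>

lemma gcpc_delta_ratio:
  assumes "\<gamma> \<ge> 0"
  shows "(1 + gcpc_delta \<gamma>) / (1 - gcpc_delta \<gamma>) = \<gamma> + sqrt (\<gamma>\<^sup>2 + 1)"
proof (cases "\<gamma> = 0")
  case True
  then show ?thesis
    by (simp add: gcpc_delta_def)
next
  case False
  define C where "C = sqrt (\<gamma>\<^sup>2 + 1)"
  have C2: "C\<^sup>2 = \<gamma>\<^sup>2 + 1"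
    unfolding C_def by simp
  then have "\<gamma> - C + 1 \<noteq> 0"
    using False by (auto simp: power2_eq_square algebra_simps)
  have "1 + gcpc_delta \<gamma> = (\<gamma> + C - 1) / \<gamma>" and "1 - gcpc_delta \<gamma> = (\<gamma> - C + 1) / \<gamma>"
    using False unfolding gcpc_delta_def C_def[symmetric] by (simp_all add: field_simps)
  then have "(1 + gcpc_delta \<gamma>) / (1 - gcpc_delta \<gamma>) = (\<gamma> + C - 1) / (\<gamma> - C + 1)"
    using False by simp
  also have "\<dots> = \<gamma> + C"
    using \<open>\<gamma> - C + 1 \<noteq> 0\<close> C2 by (simp add: field_simps power2_eq_square)
  finally show ?thesis
    unfolding C_def .
qed

text \<open>The half-angle formula \<open>tan (\<alpha> / 2) = sin \<alpha> / (1 + cos \<alpha>)\<close> for the polar angle \<open>\<alpha>\<close>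
  of \<open>(x, y)\<close>; unlike \<open>tan (Arg (Complex x y) / 2)\<close> it is visibly smooth off the
  non-positive real axis.\<close>
definition half_angle_tan :: "real \<Rightarrow> real \<Rightarrow> real" where
  "half_angle_tan x y = y / (sqrt (x\<^sup>2 + y\<^sup>2) + x)"

lemma tan_half_Arg:
  assumes "sqrt (x\<^sup>2 + y\<^sup>2) + x > 0"
  shows "tan (Arg (Complex x y) / 2) = half_angle_tan x y"
proof -
  have z: "Complex x y \<noteq> 0"
    using assms by (auto simp: complex_eq_iff)
  have norm: "cmod (Complex x y) = sqrt (x\<^sup>2 + y\<^sup>2)"
    by (simp add: cmod_def)
  have "tan (Arg (Complex x y) / 2) = sin (Arg (Complex x y)) / (cos (Arg (Complex x y)) + 1)"
    using tan_half[of "Arg (Complex x y) / 2"] by simp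
  also have "\<dots> = (y / sqrt (x\<^sup>2 + y\<^sup>2)) / (x / sqrt (x\<^sup>2 + y\<^sup>2) + 1)"
    using z by (simp add: cos_Arg sin_Arg norm)
  also have "\<dots> = half_angle_tan x y"
    using z assms by (simp add: field_simps half_angle_tan_def complex_eq_iff)
  finally show ?thesis .
qed

lemma half_angle_tan_has_real_derivative:
  assumes x: "(x has_real_derivative x') (at t)" and y: "(y has_real_derivative y') (at t)"
    and d: "sqrt ((x t)\<^sup>2 + (y t)\<^sup>2) + x t > 0"
  shows "((\<lambda>t. half_angle_tan (x t) (y t)) has_real_derivative
      (x t * y' - y t * x') / (sqrt ((x t)\<^sup>2 + (y t)\<^sup>2) * (sqrt ((x t)\<^sup>2 + (y t)\<^sup>2) + x t))) (at t)"
proof -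
  define r where "r = sqrt ((x t)\<^sup>2 + (y t)\<^sup>2)"
  have r: "r > 0"
    using d by (auto simp: r_def sum_power2_gt_zero_iff)
  have r2: "r\<^sup>2 = (x t)\<^sup>2 + (y t)\<^sup>2"
    unfolding r_def by simp
  have dr: "((\<lambda>t. sqrt ((x t)\<^sup>2 + (y t)\<^sup>2)) has_real_derivative (x t * x' + y t * y') / r) (at t)"
    using r unfolding r_def
    by (auto intro!: derivative_eq_intros x y) (simp add: field_simps)
  have "((\<lambda>t. half_angle_tan (x t) (y t)) has_real_derivative
      (y' * (r + x t) - y t * ((x t * x' + y t * y') / r + x')) / ((r + x t) * (r + x t))) (at t)"
    unfolding half_angle_tan_def using DERIV_divide[OF y DERIV_add[OF dr x]] d
    unfolding r_def by simp
  moreover have "y' * (r + x t) - y t * ((x t * x' + y t * y') / r + x')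
      = (r + x t) * (x t * y' - y t * x') / r"
    using r r2 by (simp add: field_simps power2_eq_square) algebra
  ultimately show ?thesis
    using d unfolding r_def[symmetric] by (simp add: power2_eq_square)
qed

lemma sqrt_sum_squares_add_pos:
  fixes x y :: real
  assumes "y \<noteq> 0 \<or> x > 0"
  shows "sqrt (x\<^sup>2 + y\<^sup>2) + x > 0"
proof -
  have "\<bar>x\<bar> \<le> sqrt (x\<^sup>2 + y\<^sup>2)"
    by (simp add: real_le_rsqrt)
  moreover have "\<bar>x\<bar> < sqrt (x\<^sup>2 + y\<^sup>2)" if "y \<noteq> 0"
    using that by (simp add: real_less_rsqrt)
  ultimately show ?thesis
    using assms by linarith
qed

lemma mult_lt_sqrt_sum_squares:
  fixes x y \<gamma> :: real
  assumes "x \<noteq> 0 \<or> y \<noteq> 0" and "\<gamma> \<ge> 0"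
  shows "\<gamma> * x < sqrt (x\<^sup>2 + y\<^sup>2) * sqrt (\<gamma>\<^sup>2 + 1)"
proof -
  have "\<gamma> * x \<le> \<gamma> * sqrt (x\<^sup>2 + y\<^sup>2)"
    using assms(2) by (intro mult_left_mono) (simp_all add: real_le_rsqrt)
  also have "\<dots> < sqrt (x\<^sup>2 + y\<^sup>2) * sqrt (\<gamma>\<^sup>2 + 1)"
    using assms by (simp add: mult.commute real_less_rsqrt sum_power2_gt_zero_iff)
  finally show ?thesis .
qed

lemma arctan_half_angle_derivative_eq:
  fixes x y \<gamma> :: real
  assumes "sqrt (x\<^sup>2 + y\<^sup>2) + x > 0" and "\<gamma> \<ge> 0"
  defines "r \<equiv> sqrt (x\<^sup>2 + y\<^sup>2)" and "K \<equiv> \<gamma> + sqrt (\<gamma>\<^sup>2 + 1)"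
  shows "K / (r * (r + x) * (1 + (K * (y / (r + x)))\<^sup>2))
    = 1 / (2 * r * (r * sqrt (\<gamma>\<^sup>2 + 1) - \<gamma> * x))"
proof -
  define P where "P = r * sqrt (\<gamma>\<^sup>2 + 1) - \<gamma> * x"
  have d: "r + x > 0" and r: "r > 0"
    using assms(1) by (auto simp: r_def sum_power2_gt_zero_iff)
  have K: "K > 0"
    using assms(2) by (simp add: K_def add_nonneg_pos)
  have P: "P > 0"
    using mult_lt_sqrt_sum_squares[of x y \<gamma>] r assms(2)
    by (auto simp: P_def r_def sum_power2_gt_zero_iff)
  have "(sqrt (\<gamma>\<^sup>2 + 1))\<^sup>2 = \<gamma>\<^sup>2 + 1" and "r\<^sup>2 = x\<^sup>2 + y\<^sup>2"
    by (simp_all add: r_def)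
  \<comment> \<open>in effect \<open>K\<^sup>2 = 2 \<gamma> K + 1\<close>\<close>
  then have identity: "(r + x)\<^sup>2 + K\<^sup>2 * y\<^sup>2 = 2 * K * (r + x) * P"
    unfolding K_def P_def by algebra
  have "1 + (K * (y / (r + x)))\<^sup>2 = ((r + x)\<^sup>2 + K\<^sup>2 * y\<^sup>2) / (r + x)\<^sup>2"
    using d by (simp add: field_simps)
  also have "\<dots> = 2 * K * P / (r + x)"
    unfolding identity using d by (simp add: power2_eq_square)
  finally have denom: "1 + (K * (y / (r + x)))\<^sup>2 = 2 * K * P / (r + x)" .
  show ?thesis
    unfolding denom P_def[symmetric] using d r K P by simp
qed

lemma gcpc_pdf_eq:
  fixes \<omega> \<gamma> lam t :: real
  assumes "lam > 0"
  defines "x \<equiv> sqrt lam * cos (t - \<omega>)" and "y \<equiv> sin (t - \<omega>)"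
  shows "gcpc_pdf \<omega> \<gamma> lam t
    = sqrt lam / (2 * pi * sqrt (x\<^sup>2 + y\<^sup>2) * (sqrt (x\<^sup>2 + y\<^sup>2) * sqrt (\<gamma>\<^sup>2 + 1) - \<gamma> * x))"
proof -
  define L where "L = sqrt lam"
  define r where "r = sqrt (x\<^sup>2 + y\<^sup>2)"
  define c where "c = cos (t - \<omega>)"
  define q where "q = (cos (t - \<omega>))\<^sup>2 + (sin (t - \<omega>))\<^sup>2 / lam"
  have L: "L > 0" "lam = L\<^sup>2"
    using assms(1) by (simp_all add: L_def)
  have q: "q = (r / L)\<^sup>2"
    using L by (simp add: q_def r_def x_def y_def L_def[symmetric] power_divide power_mult_distrib field_simps)
  moreover have "r \<ge> 0"
    by (simp add: r_def)
  ultimately have "sqrt q = r / L"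
    using L by simp
  moreover have "gcpc_pdf \<omega> \<gamma> lam t = 1 / (2 * pi * L * (q * sqrt (\<gamma>\<^sup>2 + 1) - \<gamma> * c * sqrt q))"
    unfolding gcpc_pdf_def Let_def L_def c_def q_def by simp
  ultimately have "gcpc_pdf \<omega> \<gamma> lam t
      = 1 / (2 * pi * L * ((r / L)\<^sup>2 * sqrt (\<gamma>\<^sup>2 + 1) - \<gamma> * c * (r / L)))"
    using q by simp
  also have "2 * pi * L * ((r / L)\<^sup>2 * sqrt (\<gamma>\<^sup>2 + 1) - \<gamma> * c * (r / L))
      = 2 * pi * r * (r * sqrt (\<gamma>\<^sup>2 + 1) - \<gamma> * (L * c)) / L"
    using L by (simp add: field_simps power2_eq_square)
  finally show ?thesis
    by (simp add: L_def c_def x_def r_def)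
qed

lemma gcpc_pdf_pos:
  assumes "lam > 0" and "\<gamma> \<ge> 0"
  shows "gcpc_pdf \<omega> \<gamma> lam t > 0"
proof -
  define x where "x = sqrt lam * cos (t - \<omega>)"
  define y where "y = sin (t - \<omega>)"
  have "x \<noteq> 0 \<or> y \<noteq> 0"
    using assms(1) sin_cos_squared_add[of "t - \<omega>"] unfolding x_def y_def
    by (metis mult_eq_0_iff power_zero_numeral add_0 real_sqrt_eq_zero_cancel_iff zero_neq_one less_irrefl)
  then have "sqrt (x\<^sup>2 + y\<^sup>2) > 0" and "\<gamma> * x < sqrt (x\<^sup>2 + y\<^sup>2) * sqrt (\<gamma>\<^sup>2 + 1)"
    using mult_lt_sqrt_sum_squares[OF _ assms(2)] by (auto simp: sum_power2_gt_zero_iff)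
  then show ?thesis
    using gcpc_pdf_eq[OF assms(1)] assms(1) by (simp add: x_def y_def)
qed

lemma gcpc_half_angle_denom_pos:
  assumes "lam > 0" and "\<bar>t - \<omega>\<bar> < pi"
  shows "sqrt ((sqrt lam * cos (t - \<omega>))\<^sup>2 + (sin (t - \<omega>))\<^sup>2) + sqrt lam * cos (t - \<omega>) > 0"
proof (rule sqrt_sum_squares_add_pos)
  show "sin (t - \<omega>) \<noteq> 0 \<or> sqrt lam * cos (t - \<omega>) > 0"
  proof (cases "t = \<omega>")
    case False
    then show ?thesis
      using sin_eq_0_pi assms(2) by (metis abs_less_iff minus_less_iff eq_iff_diff_eq_0)
  qed (use assms(1) in simp)
qed

definition gcpc_primitive :: "real \<Rightarrow> real \<Rightarrow> real \<Rightarrow> real \<Rightarrow> real" where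
  "gcpc_primitive \<omega> \<gamma> lam t =
     arctan ((\<gamma> + sqrt (\<gamma>\<^sup>2 + 1)) * half_angle_tan (sqrt lam * cos (t - \<omega>)) (sin (t - \<omega>))) / pi"

lemma gcpc_primitive_eq:
  assumes "lam > 0" and "\<gamma> \<ge> 0" and "\<bar>t - \<omega>\<bar> < pi"
  shows "gcpc_primitive \<omega> \<gamma> lam t
    = arctan ((1 + gcpc_delta \<gamma>) / (1 - gcpc_delta \<gamma>) * tan (gcpc_psi \<omega> lam t / 2)) / pi"
  using tan_half_Arg[OF gcpc_half_angle_denom_pos[OF assms(1,3)]]
  by (simp add: gcpc_primitive_def gcpc_delta_ratio[OF assms(2)] gcpc_psi_def atan2_def)

lemma gcpc_primitive_has_real_derivative:
  assumes "lam > 0" and "\<gamma> \<ge> 0" and "\<bar>t - \<omega>\<bar> < pi"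
  shows "(gcpc_primitive \<omega> \<gamma> lam has_real_derivative gcpc_pdf \<omega> \<gamma> lam t) (at t)"
proof -
  define L where "L = sqrt lam"
  define x where "x = L * cos (t - \<omega>)"
  define y where "y = sin (t - \<omega>)"
  define r where "r = sqrt (x\<^sup>2 + y\<^sup>2)"
  define K where "K = \<gamma> + sqrt (\<gamma>\<^sup>2 + 1)"
  define h where "h t = half_angle_tan (L * cos (t - \<omega>)) (sin (t - \<omega>))" for t
  have d: "r + x > 0"
    using gcpc_half_angle_denom_pos[OF assms(1,3)] by (simp add: r_def x_def y_def L_def)
  have "(h has_real_derivative
      (x * cos (t - \<omega>) - y * (- L * sin (t - \<omega>))) / (r * (r + x))) (at t)"
    using d unfolding h_def r_def x_def y_def
    by (intro half_angle_tan_has_real_derivative) (auto intro!: derivative_eq_intros)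
  moreover have "x * cos (t - \<omega>) - y * (- L * sin (t - \<omega>)) = L"
    by (simp add: x_def y_def algebra_simps flip: distrib_left)
  ultimately have "(h has_real_derivative L / (r * (r + x))) (at t)"
    by simp
  then have "((\<lambda>t. arctan (K * h t) / pi) has_real_derivative
      inverse (1 + (K * h t)\<^sup>2) * (K * (L / (r * (r + x)))) / pi) (at t)"
    by (intro DERIV_cdivide DERIV_chain2[OF DERIV_arctan] DERIV_cmult)
  moreover have "(\<lambda>t. arctan (K * h t) / pi) = gcpc_primitive \<omega> \<gamma> lam"
    by (simp add: fun_eq_iff h_def K_def L_def gcpc_primitive_def)
  moreover have "inverse (1 + (K * h t)\<^sup>2) * (K * (L / (r * (r + x)))) / pi = gcpc_pdf \<omega> \<gamma> lam t"
  proof -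
    have "h t = y / (r + x)"
      by (simp add: h_def half_angle_tan_def x_def y_def r_def)
    then have "inverse (1 + (K * h t)\<^sup>2) * (K * (L / (r * (r + x)))) / pi
        = L / pi * (K / (r * (r + x) * (1 + (K * (y / (r + x)))\<^sup>2)))"
      by (simp add: inverse_eq_divide ac_simps)
    also have "\<dots> = L / pi * (1 / (2 * r * (r * sqrt (\<gamma>\<^sup>2 + 1) - \<gamma> * x)))"
      unfolding K_def r_def
      by (subst arctan_half_angle_derivative_eq) (use d assms(2) in \<open>simp_all add: r_def\<close>)
    also have "\<dots> = gcpc_pdf \<omega> \<gamma> lam t"
      using gcpc_pdf_eq[OF assms(1)] by (simp add: L_def r_def x_def y_def)
    finally show ?thesis .
  qed
  ultimately show ?thesis
    by simp
qed

lemma gcpc_pdf_has_integral: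
  assumes "lam > 0" and "\<gamma> \<ge> 0" and "\<omega> - pi < a" and "a \<le> b" and "b < \<omega> + pi"
  shows "(gcpc_pdf \<omega> \<gamma> lam has_integral gcpc_primitive \<omega> \<gamma> lam b - gcpc_primitive \<omega> \<gamma> lam a) {a..b}"
proof (rule fundamental_theorem_of_calculus[OF assms(4)])
  fix t
  assume "t \<in> {a..b}"
  then have "(gcpc_primitive \<omega> \<gamma> lam has_real_derivative gcpc_pdf \<omega> \<gamma> lam t) (at t)"
    using assms by (intro gcpc_primitive_has_real_derivative) auto
  then show "(gcpc_primitive \<omega> \<gamma> lam has_vector_derivative gcpc_pdf \<omega> \<gamma> lam t) (at t within {a..b})"
    by (simp add: has_real_derivative_iff_has_vector_derivative has_vector_derivative_at_within)
qed

lemma distributed_measure_atLeastAtMost: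
  fixes X :: "'s \<Rightarrow> real" and f :: "real \<Rightarrow> real"
  assumes X: "distributed M lborel X (\<lambda>x. ennreal (f x))"
    and nonneg: "\<And>x. x \<in> {a..b} \<Longrightarrow> 0 \<le> f x" and f: "(f has_integral I) {a..b}"
  shows "measure M {x \<in> space M. a \<le> X x \<and> X x \<le> b} = I"
proof -
  have "{x \<in> space M. a \<le> X x \<and> X x \<le> b} = X -` {a..b} \<inter> space M"
    by auto
  then have "measure M {x \<in> space M. a \<le> X x \<and> X x \<le> b} = measure (distr M lborel X) {a..b}"
    using measure_distr[OF distributed_measurable[OF X]] by simp
  also have "\<dots> = measure (density lborel (\<lambda>x. ennreal (f x))) {a..b}"
    using distributed_distr_eq_density[OF X] by simp
  also have "\<dots> = enn2real (\<integral>\<^sup>+ x. ennreal (f x) * indicator {a..b} x \<partial>lborel)"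
    unfolding measure_def using emeasure_density[OF distributed_borel_measurable[OF X]] by simp
  also have "\<dots> = I"
    using nn_integral_has_integral_lebesgue'[OF nonneg f] has_integral_nonneg[OF f nonneg] by simp
  finally show ?thesis .
qed

theorem mainTheorem5:
  fixes M :: "'s measure" and \<theta> :: "'s \<Rightarrow> real"
    and \<omega> \<gamma> lam a b :: real
  assumes "prob_space M"
    and "lam > 0" and "\<gamma> \<ge> 0" and "-pi \<le> \<omega>" and "\<omega> \<le> pi"
    and "distributed M lborel \<theta> (gcpc_density \<omega> \<gamma> lam)"
    and "\<omega> - pi < a" and "a \<le> b" and "b < \<omega> + pi"
  shows "measure M {x \<in> space M. a \<le> \<theta> x \<and> \<theta> x \<le> b} =
    (1 / pi) *
      (arctan ((1 + gcpc_delta \<gamma>) / (1 - gcpc_delta \<gamma>) * tan (gcpc_psi \<omega> lam b / 2))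
     - arctan ((1 + gcpc_delta \<gamma>) / (1 - gcpc_delta \<gamma>) * tan (gcpc_psi \<omega> lam a / 2)))"
proof -
  let ?f = "\<lambda>t. indicator {\<omega> - pi<..\<omega> + pi} t * gcpc_pdf \<omega> \<gamma> lam t"
  have "distributed M lborel \<theta> (\<lambda>t. ennreal (?f t))"
    using assms(6) by (simp add: gcpc_density_def[abs_def])
  moreover have "(?f has_integral gcpc_primitive \<omega> \<gamma> lam b - gcpc_primitive \<omega> \<gamma> lam a) {a..b}"
    using gcpc_pdf_has_integral[OF assms(2,3,7-9)]
    by (rule has_integral_eq[rotated]) (use assms(7-9) in \<open>simp add: indicator_def\<close>)
  ultimately have "measure M {x \<in> space M. a \<le> \<theta> x \<and> \<theta> x \<le> b}
      = gcpc_primitive \<omega> \<gamma> lam b - gcpc_primitive \<omega> \<gamma> lam a"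
    using gcpc_pdf_pos[OF assms(2,3)]
    by (intro distributed_measure_atLeastAtMost) (auto simp: less_imp_le)
  then show ?thesis
    using assms(7-9) by (simp add: gcpc_primitive_eq[OF assms(2,3)] diff_divide_distrib)
qed

end
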